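(* Let $\varepsilon\ge0$ and let $x^\varepsilon_\omega=(y^\varepsilon_\omega,z^\varepsilon_\omega)\in\mathcal{X}$ be an $\varepsilon$-optimal solution of the penalty problem, i.e. $F_\omega(x^\varepsilon_\omega)\le F_\omega(x^\star_\omega)+\varepsilon$ and $z^\varepsilon_\omega(t)\ge0$ for a.e. $t\in\Omega$. Define $C_r=F(x^\star)-\operatorname{ess\,min}_{x\in\mathcal{X},z\ge0}F(x)$. Then $F(x^\varepsilon_\omega)\le F(x^\star)+\varepsilon$ and $r(x^\varepsilon_\omega)\le2\omega(C_r+\varepsilon)$.
   Context: Let $\Omega=(t_0,t_E)$ bounded, $t_1,\dots,t_M\in[t_0,t_E]$; $\mathcal{X}=(H^1(\Omega))^{n_y}\times(L^2(\Omega))^{n_z}$, $x=(y,z)$. For $f:\mathbb{R}^{n_y}\times\mathbb{R}^{n_y}\times\mathbb{R}^{n_z}\times\Omega\to\mathbb{R}$, $c$ (values in $\mathbb{R}^{n_c}$), $b:(\mathbb{R}^{n_y})^M\to\mathbb{R}^{n_b}$: $F(x)=\int_\Omega f(\dot y,y,z,t)dt$, $r(x)=\int_\Omega\|c(\dot y,y,z,t)\|_2^2dt+\|b(y(t_1),\dots,y(t_M))\|_2^2$. The DOP is to minimize $F$ subject to $b(\dots)=0$, $c(\dot y,y,z,t)=0$ and $z\ge0$ a.e.; by assumption it has a global minimizer $x^\star$ (so $r(x^\star)=0$). $F$ is bounded below on $\{x\in\mathcal{X}:z\ge0\}$. For $\omega\in(0,1)$, $F_\omega=F+\frac1{2\omega}r$;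 the penalty problem is to minimize $F_\omega$ over $\{x\in\mathcal{X}:z\ge0\text{ a.e.}\}$, and $x^\star_\omega$ is a minimizer of it. *)

theory Defs
  imports "HOL-Analysis.Analysis"
begin

definition L2 :: "real set \<Rightarrow> (real \<Rightarrow> 'a::euclidean_space) \<Rightarrow> bool" where
  "L2 S u \<longleftrightarrow> u \<in> borel_measurable (lebesgue_on S)
                 \<and> integrable (lebesgue_on S) (\<lambda>t. (norm (u t))\<^sup>2)"

text \<open>Weak-derivative relation on [a,b]: y is the absolutely continuous
  representative y(t) = y(a) + int_a^t v with v in L2.\<close>
definition is_wderiv :: "real \<Rightarrow> real \<Rightarrow> (real \<Rightarrow> 'a::euclidean_space) \<Rightarrow> (real \<Rightarrow> 'a) \<Rightarrow> bool" where
  "is_wderiv a b y v \<longleftrightarrow> L2 {a<..<b} v \<and> (\<forall>t\<in>{a..b}. y t = y a + integral {a..t} v)"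

definition H1 :: "real \<Rightarrow> real \<Rightarrow> (real \<Rightarrow> 'a::euclidean_space) \<Rightarrow> bool" where
  "H1 a b y \<longleftrightarrow> L2 {a<..<b} y \<and> (\<exists>v. is_wderiv a b y v)"

definition wderiv :: "real \<Rightarrow> real \<Rightarrow> (real \<Rightarrow> 'a::euclidean_space) \<Rightarrow> (real \<Rightarrow> 'a)" where
  "wderiv a b y = (SOME v. is_wderiv a b y v)"

definition inX :: "real \<Rightarrow> real \<Rightarrow> (real \<Rightarrow> real^'ny) \<times> (real \<Rightarrow> real^'nz) \<Rightarrow> bool" where
  "inX t0 tE x \<longleftrightarrow> H1 t0 tE (fst x) \<and> L2 {t0<..<tE} (snd x)"

definition znonneg :: "real \<Rightarrow> real \<Rightarrow> (real \<Rightarrow> real^'ny) \<times> (real \<Rightarrow> real^'nz) \<Rightarrow> bool" where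
  "znonneg t0 tE x \<longleftrightarrow> (AE t in lebesgue_on {t0<..<tE}. \<forall>i. 0 \<le> snd x t $ i)"

definition objF :: "real \<Rightarrow> real \<Rightarrow> (real^'ny \<Rightarrow> real^'ny \<Rightarrow> real^'nz \<Rightarrow> real \<Rightarrow> real)
    \<Rightarrow> (real \<Rightarrow> real^'ny) \<times> (real \<Rightarrow> real^'nz) \<Rightarrow> real" where
  "objF t0 tE f x = (\<integral>t. f (wderiv t0 tE (fst x) t) (fst x t) (snd x t) t \<partial>(lebesgue_on {t0<..<tE}))"

definition resid :: "real \<Rightarrow> real \<Rightarrow> (real^'ny \<Rightarrow> real^'ny \<Rightarrow> real^'nz \<Rightarrow> real \<Rightarrow> real^'nc)
    \<Rightarrow> ((real^'ny)^'m \<Rightarrow> real^'nb) \<Rightarrow> ('m \<Rightarrow> real)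
    \<Rightarrow> (real \<Rightarrow> real^'ny) \<times> (real \<Rightarrow> real^'nz) \<Rightarrow> real" where
  "resid t0 tE c b tp x =
     (\<integral>t. (norm (c (wderiv t0 tE (fst x) t) (fst x t) (snd x t) t))\<^sup>2 \<partial>(lebesgue_on {t0<..<tE}))
     + (norm (b (\<chi> i. fst x (tp i))))\<^sup>2"

definition penF where
  "penF t0 tE f c b tp \<omega> x = objF t0 tE f x + resid t0 tE c b tp x / (2 * \<omega>)"

definition dop_feasible where
  "dop_feasible t0 tE c b tp x \<longleftrightarrow> inX t0 tE x \<and> znonneg t0 tE x
     \<and> b (\<chi> i. fst x (tp i)) = 0
     \<and> (AE t in lebesgue_on {t0<..<tE}. c (wderiv t0 tE (fst x) t) (fst x t) (snd x t) t = 0)"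

end

theory Submission
  imports Defs
begin

text \<open>A feasible point \<open>x\<^sup>\<star>\<close> of the DOP has zero residual, so the penalty value of \<open>x\<^sup>\<star>\<close> is \<open>F(x\<^sup>\<star>)\<close>;
  hence \<open>F\<^sub>\<omega>(x\<^sup>\<epsilon>\<^sub>\<omega>) \<le> F\<^sub>\<omega>(x\<^sup>\<star>\<^sub>\<omega>) + \<epsilon> \<le> F(x\<^sup>\<star>) + \<epsilon>\<close>. Dropping the nonnegative penalty term gives the bound
  on \<open>F\<close>; bounding \<open>F(x\<^sup>\<epsilon>\<^sub>\<omega>)\<close> below by the infimum of \<open>F\<close> gives the bound on \<open>r\<close>.\<close>

lemma penalty_eps_optimal_bounds:
  fixes F r :: "'a \<Rightarrow> real"
  assumes r_nonneg: "\<And>x. x \<in> S \<Longrightarrow> 0 \<le> r x"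
    and xs: "xs \<in> S" "r xs = 0"
    and "0 < \<omega>"
    and xsw_min: "\<And>x. x \<in> S \<Longrightarrow> F xsw + r xsw / (2 * \<omega>) \<le> F x + r x / (2 * \<omega>)"
    and xe: "xe \<in> S"
    and xe_opt: "F xe + r xe / (2 * \<omega>) \<le> F xsw + r xsw / (2 * \<omega>) + \<epsilon>"
    and bdd: "bdd_below (F ` S)"
  shows "F xe \<le> F xs + \<epsilon>"
    and "r xe \<le> 2 * \<omega> * ((F xs - Inf (F ` S)) + \<epsilon>)"
proof -
  have pen_xe: "F xe + r xe / (2 * \<omega>) \<le> F xs + \<epsilon>"
    using xe_opt xsw_min[OF xs(1)] xs(2) by simp
  have "0 \<le> r xe / (2 * \<omega>)"
    using r_nonneg[OF xe] \<open>0 < \<omega>\<close> by simp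
  with pen_xe show "F xe \<le> F xs + \<epsilon>" by linarith
  have "Inf (F ` S) \<le> F xe"
    using bdd xe by (intro cInf_lower) auto
  with pen_xe have "r xe / (2 * \<omega>) \<le> F xs - Inf (F ` S) + \<epsilon>" by linarith
  then show "r xe \<le> 2 * \<omega> * ((F xs - Inf (F ` S)) + \<epsilon>)"
    using \<open>0 < \<omega>\<close> by (simp add: pos_divide_le_eq mult.commute)
qed

lemma resid_nonneg: "0 \<le> resid t0 tE c b tp x"
  unfolding resid_def by (intro add_nonneg_nonneg integral_nonneg_AE) auto

lemma resid_eq_0_if_dop_feasible:
  assumes "dop_feasible t0 tE c b tp x"
  shows "resid t0 tE c b tp x = 0"
proof -
  have "AE t in lebesgue_on {t0<..<tE}.
          (norm (c (wderiv t0 tE (fst x) t) (fst x t) (snd x t) t))\<^sup>2 = 0"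
    using assms unfolding dop_feasible_def by (auto elim: AE_mp)
  then show ?thesis
    using assms unfolding resid_def dop_feasible_def by (simp add: integral_eq_zero_AE)
qed

theorem mainTheorem10:
  fixes t0 tE :: real
    and tp :: "'m::finite \<Rightarrow> real"
    and f :: "real^'ny \<Rightarrow> real^'ny \<Rightarrow> real^'nz \<Rightarrow> real \<Rightarrow> real"
    and c :: "real^'ny \<Rightarrow> real^'ny \<Rightarrow> real^'nz \<Rightarrow> real \<Rightarrow> real^'nc"
    and b :: "(real^'ny)^'m \<Rightarrow> real^'nb"
    and \<omega> \<epsilon> :: real
    and xs xsw xe :: "(real \<Rightarrow> real^'ny) \<times> (real \<Rightarrow> real^'nz)"
  assumes "t0 < tE"
    and "\<forall>i. tp i \<in> {t0..tE}"
    and xs_feas: "dop_feasible t0 tE c b tp xs"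
    and xs_min: "\<forall>x. dop_feasible t0 tE c b tp x \<longrightarrow> objF t0 tE f xs \<le> objF t0 tE f x"
    and bdd: "bdd_below (objF t0 tE f ` {x. inX t0 tE x \<and> znonneg t0 tE x})"
    and "0 < \<omega>" and "\<omega> < 1"
    and xsw: "inX t0 tE xsw" "znonneg t0 tE xsw"
    and xsw_min: "\<forall>x. inX t0 tE x \<and> znonneg t0 tE x \<longrightarrow>
                    penF t0 tE f c b tp \<omega> xsw \<le> penF t0 tE f c b tp \<omega> x"
    and "0 \<le> \<epsilon>"
    and xe: "inX t0 tE xe" "znonneg t0 tE xe"
    and xe_opt: "penF t0 tE f c b tp \<omega> xe \<le> penF t0 tE f c b tp \<omega> xsw + \<epsilon>"
  shows "objF t0 tE f xe \<le> objF t0 tE f xs + \<epsilon>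
       \<and> resid t0 tE c b tp xe
           \<le> 2 * \<omega> * ((objF t0 tE f xs - Inf (objF t0 tE f ` {x. inX t0 tE x \<and> znonneg t0 tE x})) + \<epsilon>)"
proof -
  let ?S = "{x. inX t0 tE x \<and> znonneg t0 tE x}"
  have "xs \<in> ?S"
    using xs_feas unfolding dop_feasible_def by simp
  note bounds = penalty_eps_optimal_bounds
    [where F = "objF t0 tE f" and r = "resid t0 tE c b tp" and S = ?S,
     OF resid_nonneg \<open>xs \<in> ?S\<close> resid_eq_0_if_dop_feasible[OF xs_feas] \<open>0 < \<omega>\<close>]
  show ?thesis
    using xsw_min xe xe_opt bdd by (auto simp: penF_def intro!: bounds)
qed

end
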